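(* Let $(\lambda^*,\mathbf{s}^{-*},\mathbf{s}^{+*},\delta^*,\boldsymbol{\alpha}^*,\gamma^* )$ be an optimal solution of model (MIP) (defined in the context). Then $\lambda^*/\delta^*$ is a maximal element of $\Omega_o$, i.e. $\lambda^*/\delta^*\in\Omega_o$ and it has the maximum number of positive components among all elements of $\Omega_o$.
   Context: Data envelopment analysis setting. There are $n$ decision making units (DMUs) indexed by $J=\{1,\dots,n\}$, each using $m$ inputs to produce $s$ outputs; DMU$_j$ has input vector $\mathbf{x}_j=(x_{1j},\dots,x_{mj})^T\in\mathbb{R}^m_+$ and output vector $\mathbf{y}_j=(y_{1j},\dots,y_{sj})^T\in\mathbb{R}^s_+$; $\mathbf{X}=[\mathbf{x}_1\cdots\mathbf{x}_n]$, $\mathbf{Y}=[\mathbf{y}_1\cdots\mathbf{y}_n]$. Define $\mathbf{R}^-=(R^-_1,\dots,R^-_m)^T$, $\mathbf{R}^+=(R^+_1,\dots,R^+_s)^T$ by $1/R^-_i=\max_{j}x_{ij}-\min_j x_{ij}$ and $1/R^+_r=\max_j y_{rj}-\min_j y_{rj}$. For $o\in J$, the RAM model is: $\rho_o=\min\, 1-\frac{1}{m+s}(\mathbf{R}^{-T}\mathbf{s}^-+\mathbf{R}^{+T}\mathbf{s}^+)$ subject to $\mathbf{X}\lambda+\mathbf{s}^-=\mathbf{x}_o$, $\mathbf{Y}\lambda-\mathbf{s}^+=\mathbf{y}_o$, $\mathbf{1}^T\lambda=1$, $\lambda\ge 0,\mathbf{s}^-\ge0,\mathbf{s}^+\ge0$.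 A DMU is RAM-efficient if its optimal value $\rho$ equals $1$; let $E\subseteq J$ be the index set of RAM-efficient DMUs and $\mathbf{X}_E,\mathbf{Y}_E$ the submatrices of $\mathbf{X},\mathbf{Y}$ with columns in $E$. Fix the evaluated DMU $o\in J$. System (S): vectors $\lambda\in\mathbb{R}^{|E|}$, $\mathbf{s}^-\in\mathbb{R}^m$, $\mathbf{s}^+\in\mathbb{R}^s$, all nonnegative, with $\mathbf{X}_E\lambda+\mathbf{s}^-=\mathbf{x}_o$, $\mathbf{Y}_E\lambda-\mathbf{s}^+=\mathbf{y}_o$, $\mathbf{1}^T\lambda=1$, $\mathbf{R}^{-T}\mathbf{s}^-+\mathbf{R}^{+T}\mathbf{s}^+=(m+s)(1-\rho_o)$. Let $\Omega_o$ be the set of all $\lambda$ for which there exist $\mathbf{s}^-,\mathbf{s}^+$ such that $(\lambda,\mathbf{s}^-,\mathbf{s}^+)$ satisfies (S). A maximal element of $\Omega_o$ is an element of $\Omega_o$ with the maximum number of positive components. Model (MIP): maximize $\mathbf{1}^T\boldsymbol{\alpha}+\gamma$ over $\lambda\in\mathbb{R}^{|E|}$, $\mathbf{s}^-\in\mathbb{R}^m$, $\mathbf{s}^+\in\mathbb{R}^s$, $\delta\in\mathbb{R}$, $\boldsymbol{\alpha}\in\{0,1\}^{|E|}$, $\gamma\in\{0,1\}$ subject to $\mathbf{X}_E\lambda+\mathbf{s}^--\mathbf{x}_o\delta=\mathbf{0}$, $\mathbf{Y}_E\lambda-\mathbf{s}^+-\mathbf{y}_o\delta=\mathbf{0}$,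 $\mathbf{1}^T\lambda-\delta=0$, $\mathbf{R}^{-T}\mathbf{s}^-+\mathbf{R}^{+T}\mathbf{s}^+-(m+s)(1-\rho_o)\delta=0$, $\boldsymbol{\alpha}\le\lambda$, $\gamma\le\delta$, $\lambda\ge\mathbf{0}$, $\mathbf{s}^-\ge\mathbf{0}$, $\mathbf{s}^+\ge\mathbf{0}$, $\delta\ge0$. *)

theory Defs
  imports Main "HOL-Analysis.Analysis"
begin

text \<open>DMUs are indexed by a finite type 'j, inputs by a finite type 'i,
  outputs by a finite type 'r.  X i j = x_{ij}, Y r j = y_{rj}.\<close>

definition Rminus :: "('i::finite \<Rightarrow> 'j::finite \<Rightarrow> real) \<Rightarrow> 'i \<Rightarrow> real" where
  "Rminus X i = inverse (Max (range (X i)) - Min (range (X i)))"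

definition Rplus :: "('r::finite \<Rightarrow> 'j::finite \<Rightarrow> real) \<Rightarrow> 'r \<Rightarrow> real" where
  "Rplus Y r = inverse (Max (range (Y r)) - Min (range (Y r)))"

definition ram_feasible ::
  "('i::finite \<Rightarrow> 'j::finite \<Rightarrow> real) \<Rightarrow> ('r::finite \<Rightarrow> 'j \<Rightarrow> real) \<Rightarrow> 'j
   \<Rightarrow> ('j \<Rightarrow> real) \<Rightarrow> ('i \<Rightarrow> real) \<Rightarrow> ('r \<Rightarrow> real) \<Rightarrow> bool" where
  "ram_feasible X Y dmu lam sm sp \<longleftrightarrow>
     (\<forall>i. (\<Sum>j\<in>UNIV. X i j * lam j) + sm i = X i dmu) \<and>
     (\<forall>r. (\<Sum>j\<in>UNIV. Y r j * lam j) - sp r = Y r dmu) \<and>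
     (\<Sum>j\<in>UNIV. lam j) = 1 \<and>
     (\<forall>j. lam j \<ge> 0) \<and> (\<forall>i. sm i \<ge> 0) \<and> (\<forall>r. sp r \<ge> 0)"

definition ram_obj ::
  "('i::finite \<Rightarrow> 'j::finite \<Rightarrow> real) \<Rightarrow> ('r::finite \<Rightarrow> 'j \<Rightarrow> real)
   \<Rightarrow> ('i \<Rightarrow> real) \<Rightarrow> ('r \<Rightarrow> real) \<Rightarrow> real" where
  "ram_obj X Y sm sp = 1 - ((\<Sum>i\<in>UNIV. Rminus X i * sm i) + (\<Sum>r\<in>UNIV. Rplus Y r * sp r))
                             / (real CARD('i) + real CARD('r))"

definition ram_rho ::
  "('i::finite \<Rightarrow> 'j::finite \<Rightarrow> real) \<Rightarrow> ('r::finite \<Rightarrow> 'j \<Rightarrow> real) \<Rightarrow> 'j \<Rightarrow> real" where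
  "ram_rho X Y dmu = Inf {ram_obj X Y sm sp | lam sm sp. ram_feasible X Y dmu lam sm sp}"

definition ram_E ::
  "('i::finite \<Rightarrow> 'j::finite \<Rightarrow> real) \<Rightarrow> ('r::finite \<Rightarrow> 'j \<Rightarrow> real) \<Rightarrow> 'j set" where
  "ram_E X Y = {j. ram_rho X Y j = 1}"

text \<open>Vectors in R^|E| are represented as functions 'j => real vanishing outside E.
  System (S) for the evaluated DMU o.\<close>
definition systemS ::
  "('i::finite \<Rightarrow> 'j::finite \<Rightarrow> real) \<Rightarrow> ('r::finite \<Rightarrow> 'j \<Rightarrow> real) \<Rightarrow> 'j
   \<Rightarrow> ('j \<Rightarrow> real) \<Rightarrow> ('i \<Rightarrow> real) \<Rightarrow> ('r \<Rightarrow> real) \<Rightarrow> bool" where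
  "systemS X Y dmu lam sm sp \<longleftrightarrow>
     (\<forall>j. j \<notin> ram_E X Y \<longrightarrow> lam j = 0) \<and>
     (\<forall>j\<in>ram_E X Y. lam j \<ge> 0) \<and> (\<forall>i. sm i \<ge> 0) \<and> (\<forall>r. sp r \<ge> 0) \<and>
     (\<forall>i. (\<Sum>j\<in>ram_E X Y. X i j * lam j) + sm i = X i dmu) \<and>
     (\<forall>r. (\<Sum>j\<in>ram_E X Y. Y r j * lam j) - sp r = Y r dmu) \<and>
     (\<Sum>j\<in>ram_E X Y. lam j) = 1 \<and>
     (\<Sum>i\<in>UNIV. Rminus X i * sm i) + (\<Sum>r\<in>UNIV. Rplus Y r * sp r)
        = (real CARD('i) + real CARD('r)) * (1 - ram_rho X Y dmu)"

definition Omega ::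
  "('i::finite \<Rightarrow> 'j::finite \<Rightarrow> real) \<Rightarrow> ('r::finite \<Rightarrow> 'j \<Rightarrow> real) \<Rightarrow> 'j \<Rightarrow> ('j \<Rightarrow> real) set" where
  "Omega X Y dmu = {lam. \<exists>sm sp. systemS X Y dmu lam sm sp}"

definition num_pos :: "'j set \<Rightarrow> ('j \<Rightarrow> real) \<Rightarrow> nat" where
  "num_pos E lam = card {j\<in>E. lam j > 0}"

definition maximal_elem ::
  "('i::finite \<Rightarrow> 'j::finite \<Rightarrow> real) \<Rightarrow> ('r::finite \<Rightarrow> 'j \<Rightarrow> real) \<Rightarrow> 'j \<Rightarrow> ('j \<Rightarrow> real) \<Rightarrow> bool" where
  "maximal_elem X Y dmu lam \<longleftrightarrow> lam \<in> Omega X Y dmu \<and>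
     (\<forall>mu\<in>Omega X Y dmu. num_pos (ram_E X Y) mu \<le> num_pos (ram_E X Y) lam)"

definition mip_feasible ::
  "('i::finite \<Rightarrow> 'j::finite \<Rightarrow> real) \<Rightarrow> ('r::finite \<Rightarrow> 'j \<Rightarrow> real) \<Rightarrow> 'j
   \<Rightarrow> ('j \<Rightarrow> real) \<Rightarrow> ('i \<Rightarrow> real) \<Rightarrow> ('r \<Rightarrow> real) \<Rightarrow> real \<Rightarrow> ('j \<Rightarrow> real) \<Rightarrow> real \<Rightarrow> bool" where
  "mip_feasible X Y dmu lam sm sp \<delta> \<alpha> \<gamma> \<longleftrightarrow>
     (\<forall>j. j \<notin> ram_E X Y \<longrightarrow> lam j = 0 \<and> \<alpha> j = 0) \<and>
     (\<forall>i. (\<Sum>j\<in>ram_E X Y. X i j * lam j) + sm i - X i dmu * \<delta> = 0) \<and>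
     (\<forall>r. (\<Sum>j\<in>ram_E X Y. Y r j * lam j) - sp r - Y r dmu * \<delta> = 0) \<and>
     (\<Sum>j\<in>ram_E X Y. lam j) - \<delta> = 0 \<and>
     (\<Sum>i\<in>UNIV. Rminus X i * sm i) + (\<Sum>r\<in>UNIV. Rplus Y r * sp r)
        - (real CARD('i) + real CARD('r)) * (1 - ram_rho X Y dmu) * \<delta> = 0 \<and>
     (\<forall>j\<in>ram_E X Y. \<alpha> j \<le> lam j) \<and> \<gamma> \<le> \<delta> \<and>
     (\<forall>j\<in>ram_E X Y. lam j \<ge> 0) \<and> (\<forall>i. sm i \<ge> 0) \<and> (\<forall>r. sp r \<ge> 0) \<and> \<delta> \<ge> 0 \<and>
     (\<forall>j\<in>ram_E X Y. \<alpha> j \<in> {0, 1}) \<and> \<gamma> \<in> {0, 1}"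

definition mip_obj :: "'j set \<Rightarrow> ('j \<Rightarrow> real) \<Rightarrow> real \<Rightarrow> real" where
  "mip_obj E \<alpha> \<gamma> = (\<Sum>j\<in>E. \<alpha> j) + \<gamma>"

definition mip_optimal ::
  "('i::finite \<Rightarrow> 'j::finite \<Rightarrow> real) \<Rightarrow> ('r::finite \<Rightarrow> 'j \<Rightarrow> real) \<Rightarrow> 'j
   \<Rightarrow> ('j \<Rightarrow> real) \<Rightarrow> ('i \<Rightarrow> real) \<Rightarrow> ('r \<Rightarrow> real) \<Rightarrow> real \<Rightarrow> ('j \<Rightarrow> real) \<Rightarrow> real \<Rightarrow> bool" where
  "mip_optimal X Y dmu lam sm sp \<delta> \<alpha> \<gamma> \<longleftrightarrow>
     mip_feasible X Y dmu lam sm sp \<delta> \<alpha> \<gamma> \<and>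
     (\<forall>lam' sm' sp' \<delta>' \<alpha>' \<gamma>'. mip_feasible X Y dmu lam' sm' sp' \<delta>' \<alpha>' \<gamma>' \<longrightarrow>
        mip_obj (ram_E X Y) \<alpha>' \<gamma>' \<le> mip_obj (ram_E X Y) \<alpha> \<gamma>)"

end

theory Submission
  imports Defs "HOL-Analysis.Analysis"
begin

text \<open>For \<delta> > 0 the continuous constraints of (MIP) are exactly system (S) scaled by \<delta>,
  and, once the scaling is large enough, a binary \<alpha> can be 1 precisely on the positive
  components. So the optimal value of (MIP) is one plus the maximal number of positive
  components over \<Omega>_o, provided \<Omega>_o is nonempty, and an optimal solution then has \<delta> > 0.
  Nonemptiness is the real content. An optimal RAM solution \<lambda> for o exists by compactness,
  and it only puts weight on efficient DMUs: if \<lambda> j > 0 for an inefficient j, some convex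
  combination \<mu> dominates j with positive weighted slack, and moving the weight \<lambda> j from j
  onto \<mu> raises the weighted slack of o by \<lambda> j times that of \<mu>.\<close>

definition dominating_weights ::
  "('i::finite \<Rightarrow> 'j::finite \<Rightarrow> real) \<Rightarrow> ('r::finite \<Rightarrow> 'j \<Rightarrow> real) \<Rightarrow> 'j \<Rightarrow> ('j \<Rightarrow> real) set" where
  "dominating_weights X Y dmu = {lam. (\<forall>j. lam j \<ge> 0) \<and> (\<Sum>j\<in>UNIV. lam j) = 1 \<and>
      (\<forall>i. (\<Sum>j\<in>UNIV. X i j * lam j) \<le> X i dmu) \<and> (\<forall>r. (\<Sum>j\<in>UNIV. Y r j * lam j) \<ge> Y r dmu)}"

definition ram_slack_sum ::
  "('i::finite \<Rightarrow> 'j::finite \<Rightarrow> real) \<Rightarrow> ('r::finite \<Rightarrow> 'j \<Rightarrow> real) \<Rightarrow> 'j \<Rightarrow> ('j \<Rightarrow> real) \<Rightarrow> real" where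
  "ram_slack_sum X Y dmu lam = (\<Sum>i\<in>UNIV. Rminus X i * (X i dmu - (\<Sum>j\<in>UNIV. X i j * lam j)))
     + (\<Sum>r\<in>UNIV. Rplus Y r * ((\<Sum>j\<in>UNIV. Y r j * lam j) - Y r dmu))"

lemma unit_weight_dominating: "(\<lambda>k. if k = dmu then 1 else 0) \<in> dominating_weights X Y dmu"
  by (simp add: dominating_weights_def if_distrib cong: if_cong)

lemma ram_slack_sum_unit_weight: "ram_slack_sum X Y dmu (\<lambda>k. if k = dmu then 1 else 0) = 0"
  by (simp add: ram_slack_sum_def if_distrib cong: if_cong)

lemma ram_slack_sum_attains_max:
  fixes X :: "'i::finite \<Rightarrow> 'j::finite \<Rightarrow> real" and Y :: "'r::finite \<Rightarrow> 'j \<Rightarrow> real"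
  obtains lam0 where "lam0 \<in> dominating_weights X Y dmu"
    and "\<And>lam. lam \<in> dominating_weights X Y dmu \<Longrightarrow> ram_slack_sum X Y dmu lam \<le> ram_slack_sum X Y dmu lam0"
proof -
  define K where "K = {v::real^'j. (\<forall>j. v$j \<ge> 0) \<and> (\<Sum>j\<in>UNIV. v$j) = 1 \<and>
      (\<forall>i. (\<Sum>j\<in>UNIV. X i j * v$j) \<le> X i dmu) \<and> (\<forall>r. (\<Sum>j\<in>UNIV. Y r j * v$j) \<ge> Y r dmu)}"
  have K_iff: "v \<in> K \<longleftrightarrow> vec_nth v \<in> dominating_weights X Y dmu" for v
    by (simp add: K_def dominating_weights_def)
  have "closed K" unfolding K_def
    by (intro closed_Collect_conj closed_Collect_all closed_Collect_le closed_Collect_eq continuous_intros)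
  moreover have "K \<subseteq> cbox 0 1"
  proof
    fix v assume v: "v \<in> K"
    have "v$j \<le> 1" for j
    proof -
      have "v$j \<le> (\<Sum>k\<in>UNIV. v$k)" using v unfolding K_def
        by (intro member_le_sum) auto
      thus ?thesis using v unfolding K_def by simp
    qed
    thus "v \<in> cbox 0 1" using v unfolding K_def by (simp add: mem_box_cart)
  qed
  ultimately have "compact K" by (meson bounded_cbox bounded_subset compact_eq_bounded_closed)
  moreover have "vec_lambda (\<lambda>k. if k = dmu then 1 else 0) \<in> K"
    using unit_weight_dominating by (simp add: K_iff vec_lambda_inverse)
  moreover have "continuous_on K (\<lambda>v. ram_slack_sum X Y dmu (vec_nth v))"
    unfolding ram_slack_sum_def by (intro continuous_intros)
  ultimately obtain v0 where "v0 \<in> K" "\<forall>v\<in>K. ram_slack_sum X Y dmu (vec_nth v) \<le> ram_slack_sum X Y dmu (vec_nth v0)"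
    using continuous_attains_sup by blast
  with that[of "vec_nth v0"] show ?thesis
    by (metis K_iff vec_lambda_inverse UNIV_I)
qed

lemma ram_feasible_iff_dominating:
  "ram_feasible X Y dmu lam sm sp \<longleftrightarrow> lam \<in> dominating_weights X Y dmu \<and>
     sm = (\<lambda>i. X i dmu - (\<Sum>j\<in>UNIV. X i j * lam j)) \<and> sp = (\<lambda>r. (\<Sum>j\<in>UNIV. Y r j * lam j) - Y r dmu)"
  unfolding ram_feasible_def dominating_weights_def
  by (auto simp: fun_eq_iff algebra_simps; metis add.commute le_add_same_cancel1)

lemma ram_rho_eq_max_slack_sum:
  fixes X :: "'i::finite \<Rightarrow> 'j::finite \<Rightarrow> real" and Y :: "'r::finite \<Rightarrow> 'j \<Rightarrow> real"
  assumes "lam0 \<in> dominating_weights X Y dmu"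
    and "\<And>lam. lam \<in> dominating_weights X Y dmu \<Longrightarrow> ram_slack_sum X Y dmu lam \<le> ram_slack_sum X Y dmu lam0"
  shows "ram_rho X Y dmu = 1 - ram_slack_sum X Y dmu lam0 / (real CARD('i) + real CARD('r))"
  unfolding ram_rho_def
proof (rule cInf_eq_minimum)
  have obj: "ram_obj X Y (\<lambda>i. X i dmu - (\<Sum>j\<in>UNIV. X i j * lam j)) (\<lambda>r. (\<Sum>j\<in>UNIV. Y r j * lam j) - Y r dmu)
    = 1 - ram_slack_sum X Y dmu lam / (real CARD('i) + real CARD('r))" for lam
    by (simp add: ram_obj_def ram_slack_sum_def)
  show "1 - ram_slack_sum X Y dmu lam0 / (real CARD('i) + real CARD('r))
    \<in> {ram_obj X Y sm sp |lam sm sp. ram_feasible X Y dmu lam sm sp}"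
    using assms(1) by (auto simp: ram_feasible_iff_dominating obj)
  fix y assume "y \<in> {ram_obj X Y sm sp |lam sm sp. ram_feasible X Y dmu lam sm sp}"
  then obtain lam where "lam \<in> dominating_weights X Y dmu"
    and y: "y = 1 - ram_slack_sum X Y dmu lam / (real CARD('i) + real CARD('r))"
    by (auto simp: ram_feasible_iff_dominating obj)
  with assms(2) show "1 - ram_slack_sum X Y dmu lam0 / (real CARD('i) + real CARD('r)) \<le> y"
    by (simp add: divide_right_mono)
qed

lemma ram_rho_eq_1_iff:
  fixes X :: "'i::finite \<Rightarrow> 'j::finite \<Rightarrow> real" and Y :: "'r::finite \<Rightarrow> 'j \<Rightarrow> real"
  shows "ram_rho X Y j = 1 \<longleftrightarrow> (\<forall>\<mu>\<in>dominating_weights X Y j. ram_slack_sum X Y j \<mu> \<le> 0)"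
proof -
  obtain lam0 where lam0: "lam0 \<in> dominating_weights X Y j"
    "\<And>lam. lam \<in> dominating_weights X Y j \<Longrightarrow> ram_slack_sum X Y j lam \<le> ram_slack_sum X Y j lam0"
    using ram_slack_sum_attains_max[of X Y j] by blast
  have "ram_slack_sum X Y j lam0 \<ge> 0"
    using lam0(2)[OF unit_weight_dominating] by (simp add: ram_slack_sum_unit_weight)
  moreover have "ram_rho X Y j = 1 - ram_slack_sum X Y j lam0 / (real CARD('i) + real CARD('r))"
    using lam0 by (rule ram_rho_eq_max_slack_sum)
  moreover have "real CARD('i) + real CARD('r) > 0"
    by (simp add: add_pos_pos)
  ultimately have "ram_rho X Y j = 1 \<longleftrightarrow> ram_slack_sum X Y j lam0 = 0"
    by auto
  also have "\<dots> \<longleftrightarrow> (\<forall>\<mu>\<in>dominating_weights X Y j. ram_slack_sum X Y j \<mu> \<le> 0)"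
    using \<open>ram_slack_sum X Y j lam0 \<ge> 0\<close> lam0 by force
  finally show ?thesis .
qed

lemma sum_mult_shift_weight:
  fixes a :: "'j::finite \<Rightarrow> real"
  shows "(\<Sum>k\<in>UNIV. a k * (lam k + c * \<mu> k - (if k = j then c else 0)))
     = (\<Sum>k\<in>UNIV. a k * lam k) + c * (\<Sum>k\<in>UNIV. a k * \<mu> k) - c * a j"
proof -
  have "(\<Sum>k\<in>UNIV. a k * (lam k + c * \<mu> k - (if k = j then c else 0)))
     = (\<Sum>k\<in>UNIV. a k * lam k + c * (a k * \<mu> k) - (if k = j then c * a j else 0))"
    by (intro sum.cong) (auto simp: algebra_simps)
  also have "\<dots> = (\<Sum>k\<in>UNIV. a k * lam k) + c * (\<Sum>k\<in>UNIV. a k * \<mu> k) - c * a j"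
    by (simp add: sum.distrib sum_subtractf sum_distrib_left)
  finally show ?thesis .
qed

lemma ram_slack_sum_shift_weight:
  "ram_slack_sum X Y dmu (\<lambda>k. lam k + c * \<mu> k - (if k = j then c else 0))
     = ram_slack_sum X Y dmu lam + c * ram_slack_sum X Y j \<mu>"
proof -
  have "(\<Sum>i\<in>UNIV. Rminus X i * (X i dmu - (\<Sum>k\<in>UNIV. X i k * (lam k + c * \<mu> k - (if k = j then c else 0)))))
    = (\<Sum>i\<in>UNIV. Rminus X i * (X i dmu - (\<Sum>k\<in>UNIV. X i k * lam k)) + c * (Rminus X i * (X i j - (\<Sum>k\<in>UNIV. X i k * \<mu> k))))"
    unfolding sum_mult_shift_weight by (intro sum.cong refl) (simp add: algebra_simps)
  moreover have "(\<Sum>r\<in>UNIV. Rplus Y r * ((\<Sum>k\<in>UNIV. Y r k * (lam k + c * \<mu> k - (if k = j then c else 0))) - Y r dmu))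
    = (\<Sum>r\<in>UNIV. Rplus Y r * ((\<Sum>k\<in>UNIV. Y r k * lam k) - Y r dmu) + c * (Rplus Y r * ((\<Sum>k\<in>UNIV. Y r k * \<mu> k) - Y r j)))"
    unfolding sum_mult_shift_weight by (intro sum.cong refl) (simp add: ring_distribs)
  ultimately show ?thesis
    unfolding ram_slack_sum_def sum.distrib sum_distrib_left[symmetric] by (simp add: ring_distribs)
qed

lemma dominating_weights_shift_weight:
  assumes lam: "lam \<in> dominating_weights X Y dmu" and \<mu>: "\<mu> \<in> dominating_weights X Y j"
    and "0 \<le> c" "c \<le> lam j"
  shows "(\<lambda>k. lam k + c * \<mu> k - (if k = j then c else 0)) \<in> dominating_weights X Y dmu"
proof -
  have "(\<Sum>k\<in>UNIV. X i k * lam k) + c * (\<Sum>k\<in>UNIV. X i k * \<mu> k) - c * X i j \<le> X i dmu" for i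
  proof -
    have "c * (\<Sum>k\<in>UNIV. X i k * \<mu> k) \<le> c * X i j"
      using \<mu> \<open>0 \<le> c\<close> unfolding dominating_weights_def by (simp add: mult_left_mono)
    moreover have "(\<Sum>k\<in>UNIV. X i k * lam k) \<le> X i dmu"
      using lam unfolding dominating_weights_def by simp
    ultimately show ?thesis by linarith
  qed
  moreover have "Y r dmu \<le> (\<Sum>k\<in>UNIV. Y r k * lam k) + c * (\<Sum>k\<in>UNIV. Y r k * \<mu> k) - c * Y r j" for r
  proof -
    have "c * Y r j \<le> c * (\<Sum>k\<in>UNIV. Y r k * \<mu> k)"
      using \<mu> \<open>0 \<le> c\<close> unfolding dominating_weights_def by (simp add: mult_left_mono)
    moreover have "Y r dmu \<le> (\<Sum>k\<in>UNIV. Y r k * lam k)"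
      using lam unfolding dominating_weights_def by simp
    ultimately show ?thesis by linarith
  qed
  moreover have "0 \<le> lam k + c * \<mu> k - (if k = j then c else 0)" for k
    using lam \<mu> \<open>0 \<le> c\<close> \<open>c \<le> lam j\<close> unfolding dominating_weights_def
    by (simp add: add_increasing2)
  moreover have "(\<Sum>k\<in>UNIV. lam k + c * \<mu> k - (if k = j then c else 0)) = 1"
    using sum_mult_shift_weight[of "\<lambda>_. 1" lam c \<mu> j] lam \<mu> unfolding dominating_weights_def by simp
  ultimately show ?thesis
    unfolding dominating_weights_def by (simp add: sum_mult_shift_weight)
qed

lemma max_slack_weights_supported_on_efficient:
  assumes lam0: "lam0 \<in> dominating_weights X Y dmu"
    and max: "\<And>lam. lam \<in> dominating_weights X Y dmu \<Longrightarrow> ram_slack_sum X Y dmu lam \<le> ram_slack_sum X Y dmu lam0"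
    and "lam0 j > 0"
  shows "j \<in> ram_E X Y"
proof (rule ccontr)
  assume "j \<notin> ram_E X Y"
  then obtain \<mu> where \<mu>: "\<mu> \<in> dominating_weights X Y j" "ram_slack_sum X Y j \<mu> > 0"
    by (force simp: ram_E_def ram_rho_eq_1_iff)
  have "(\<lambda>k. lam0 k + lam0 j * \<mu> k - (if k = j then lam0 j else 0)) \<in> dominating_weights X Y dmu"
    using dominating_weights_shift_weight[OF lam0 \<mu>(1)] \<open>lam0 j > 0\<close> by simp
  from max[OF this] have "ram_slack_sum X Y dmu lam0 + lam0 j * ram_slack_sum X Y j \<mu> \<le> ram_slack_sum X Y dmu lam0"
    by (simp only: ram_slack_sum_shift_weight)
  moreover have "lam0 j * ram_slack_sum X Y j \<mu> > 0"
    using \<mu>(2) \<open>lam0 j > 0\<close> by simp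
  ultimately show False
    by linarith
qed

lemma Omega_nonempty:
  fixes X :: "'i::finite \<Rightarrow> 'j::finite \<Rightarrow> real" and Y :: "'r::finite \<Rightarrow> 'j \<Rightarrow> real"
  shows "Omega X Y dmu \<noteq> {}"
proof -
  obtain lam0 where lam0: "lam0 \<in> dominating_weights X Y dmu"
    "\<And>lam. lam \<in> dominating_weights X Y dmu \<Longrightarrow> ram_slack_sum X Y dmu lam \<le> ram_slack_sum X Y dmu lam0"
    using ram_slack_sum_attains_max[of X Y dmu] by blast
  have rho: "ram_rho X Y dmu = 1 - ram_slack_sum X Y dmu lam0 / (real CARD('i) + real CARD('r))"
    using lam0 by (rule ram_rho_eq_max_slack_sum)
  have nonneg: "\<forall>j. lam0 j \<ge> 0"
    using lam0(1) unfolding dominating_weights_def by simp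
  have outside: "\<forall>j. j \<notin> ram_E X Y \<longrightarrow> lam0 j = 0"
  proof (intro allI impI)
    fix j assume "j \<notin> ram_E X Y"
    then have "\<not> lam0 j > 0"
      using max_slack_weights_supported_on_efficient[of lam0 X Y dmu j] lam0 by blast
    with nonneg[rule_format, of j] show "lam0 j = 0"
      by linarith
  qed
  then have sum_E: "(\<Sum>j\<in>ram_E X Y. g j * lam0 j) = (\<Sum>j\<in>UNIV. g j * lam0 j)"
    "(\<Sum>j\<in>ram_E X Y. lam0 j) = (\<Sum>j\<in>UNIV. lam0 j)" for g :: "'j \<Rightarrow> real"
    by (auto intro!: sum.mono_neutral_left)
  have "systemS X Y dmu lam0 (\<lambda>i. X i dmu - (\<Sum>j\<in>UNIV. X i j * lam0 j))
    (\<lambda>r. (\<Sum>j\<in>UNIV. Y r j * lam0 j) - Y r dmu)"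
    using outside nonneg lam0(1) rho add_pos_pos[of "real CARD('i)" "real CARD('r)"]
    unfolding systemS_def sum_E dominating_weights_def
    by (simp add: ram_slack_sum_def)
  then show ?thesis
    unfolding Omega_def by blast
qed

definition mip_cone ::
  "('i::finite \<Rightarrow> 'j::finite \<Rightarrow> real) \<Rightarrow> ('r::finite \<Rightarrow> 'j \<Rightarrow> real) \<Rightarrow> 'j
   \<Rightarrow> ('j \<Rightarrow> real) \<Rightarrow> ('i \<Rightarrow> real) \<Rightarrow> ('r \<Rightarrow> real) \<Rightarrow> real \<Rightarrow> bool" where
  "mip_cone X Y dmu lam sm sp \<delta> \<longleftrightarrow>
     (\<forall>j. j \<notin> ram_E X Y \<longrightarrow> lam j = 0) \<and>
     (\<forall>i. (\<Sum>j\<in>ram_E X Y. X i j * lam j) + sm i - X i dmu * \<delta> = 0) \<and>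
     (\<forall>r. (\<Sum>j\<in>ram_E X Y. Y r j * lam j) - sp r - Y r dmu * \<delta> = 0) \<and>
     (\<Sum>j\<in>ram_E X Y. lam j) - \<delta> = 0 \<and>
     (\<Sum>i\<in>UNIV. Rminus X i * sm i) + (\<Sum>r\<in>UNIV. Rplus Y r * sp r)
        - (real CARD('i) + real CARD('r)) * (1 - ram_rho X Y dmu) * \<delta> = 0 \<and>
     (\<forall>j\<in>ram_E X Y. lam j \<ge> 0) \<and> (\<forall>i. sm i \<ge> 0) \<and> (\<forall>r. sp r \<ge> 0) \<and> \<delta> \<ge> 0"

lemma mip_feasible_iff_cone:
  "mip_feasible X Y dmu lam sm sp \<delta> \<alpha> \<gamma> \<longleftrightarrow> mip_cone X Y dmu lam sm sp \<delta> \<and>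
     (\<forall>j. j \<notin> ram_E X Y \<longrightarrow> \<alpha> j = 0) \<and> (\<forall>j\<in>ram_E X Y. \<alpha> j \<in> {0, 1} \<and> \<alpha> j \<le> lam j) \<and>
     \<gamma> \<in> {0, 1} \<and> \<gamma> \<le> \<delta>"
  unfolding mip_feasible_def mip_cone_def by blast

lemma systemS_iff_mip_cone_scaled:
  assumes "t > 0"
  shows "systemS X Y dmu mu sm sp \<longleftrightarrow>
    mip_cone X Y dmu (\<lambda>j. t * mu j) (\<lambda>i. t * sm i) (\<lambda>r. t * sp r) t"
proof -
  have cancel: "t * u + t * v - w * t = 0 \<longleftrightarrow> u + v = w" "t * u - t * v - w * t = 0 \<longleftrightarrow> u - v = w"
    for u v w :: real
    using assms by (simp_all add: mult.commute[of w] flip: distrib_left right_diff_distrib)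
  show ?thesis
    unfolding systemS_def mip_cone_def mult.left_commute[of _ t] sum_distrib_left[symmetric] cancel
    using assms by (auto simp: zero_le_mult_iff)
qed

lemma exists_scale_ge_one_on_positive:
  fixes f :: "'j::finite \<Rightarrow> real"
  obtains t where "t \<ge> 1" "\<And>j. f j > 0 \<Longrightarrow> t * f j \<ge> 1"
proof
  define s where "s = (\<Sum>k\<in>UNIV. if f k > 0 then inverse (f k) else 0)"
  show "1 + s \<ge> 1"
    unfolding s_def by (simp add: sum_nonneg)
  fix j assume "f j > 0"
  have "inverse (f j) \<le> s"
    using member_le_sum[of j UNIV "\<lambda>k. if f k > 0 then inverse (f k) else 0"] \<open>f j > 0\<close>
    unfolding s_def by simp
  then have "inverse (f j) * f j \<le> (1 + s) * f j"
    using \<open>f j > 0\<close> by (intro mult_right_mono) auto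
  with \<open>f j > 0\<close> show "(1 + s) * f j \<ge> 1"
    by simp
qed

lemma Omega_mip_feasible:
  assumes "mu \<in> Omega X Y dmu"
  obtains lam sm sp \<delta> \<alpha> where "mip_feasible X Y dmu lam sm sp \<delta> \<alpha> 1"
    and "mip_obj (ram_E X Y) \<alpha> 1 = real (num_pos (ram_E X Y) mu) + 1"
proof -
  let ?E = "ram_E X Y"
  obtain sm sp where S: "systemS X Y dmu mu sm sp"
    using assms unfolding Omega_def by blast
  obtain t where "t \<ge> 1" and t: "\<And>j. mu j > 0 \<Longrightarrow> t * mu j \<ge> 1"
    using exists_scale_ge_one_on_positive[of mu] by blast
  define \<alpha> where "\<alpha> j = (if j \<in> ?E \<and> mu j > 0 then 1 else 0 :: real)" for j
  have "mip_cone X Y dmu (\<lambda>j. t * mu j) (\<lambda>i. t * sm i) (\<lambda>r. t * sp r) t"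
    using S systemS_iff_mip_cone_scaled[of t X Y dmu mu sm sp] \<open>t \<ge> 1\<close> by simp
  moreover have "\<alpha> j \<le> t * mu j" if "j \<in> ?E" for j
    using t[of j] S that \<open>t \<ge> 1\<close> unfolding \<alpha>_def systemS_def by auto
  ultimately have "mip_feasible X Y dmu (\<lambda>j. t * mu j) (\<lambda>i. t * sm i) (\<lambda>r. t * sp r) t \<alpha> 1"
    using \<open>t \<ge> 1\<close> unfolding mip_feasible_iff_cone \<alpha>_def by auto
  moreover have "mip_obj ?E \<alpha> 1 = real (num_pos ?E mu) + 1"
    unfolding mip_obj_def num_pos_def \<alpha>_def by (simp add: sum.inter_filter[symmetric])
  ultimately show ?thesis
    using that by blast
qed

lemma mip_obj_le_num_pos:
  assumes "mip_feasible X Y dmu lam sm sp \<delta> \<alpha> \<gamma>"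
  shows "mip_obj (ram_E X Y) \<alpha> \<gamma> \<le> real (num_pos (ram_E X Y) lam) + 1"
proof -
  let ?E = "ram_E X Y"
  have "(\<Sum>j\<in>?E. \<alpha> j) \<le> (\<Sum>j\<in>?E. if lam j > 0 then 1 else 0)"
    using assms unfolding mip_feasible_def by (intro sum_mono) fastforce
  also have "\<dots> = real (num_pos ?E lam)"
    unfolding num_pos_def by (simp add: sum.inter_filter[symmetric])
  finally show ?thesis
    using assms unfolding mip_feasible_def mip_obj_def by auto
qed

lemma mip_feasible_delta_pos:
  assumes F: "mip_feasible X Y dmu lam sm sp \<delta> \<alpha> \<gamma>" and "mip_obj (ram_E X Y) \<alpha> \<gamma> > 0"
  shows "\<delta> > 0"
proof (rule ccontr)
  let ?E = "ram_E X Y"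
  assume "\<not> \<delta> > 0"
  with F have "\<delta> = 0" "\<gamma> = 0" "(\<Sum>j\<in>?E. lam j) = 0"
    unfolding mip_feasible_def by auto
  moreover have "\<forall>j\<in>?E. lam j \<ge> 0"
    using F unfolding mip_feasible_def by blast
  ultimately have "\<forall>j\<in>?E. lam j = 0"
    by (simp add: sum_nonneg_eq_0_iff)
  with F have "\<forall>j\<in>?E. \<alpha> j = 0"
    unfolding mip_feasible_def by fastforce
  with \<open>\<gamma> = 0\<close> \<open>mip_obj ?E \<alpha> \<gamma> > 0\<close> show False
    unfolding mip_obj_def by simp
qed

theorem theorem1:
  fixes X :: "'i::finite \<Rightarrow> 'j::finite \<Rightarrow> real"
    and Y :: "'r::finite \<Rightarrow> 'j \<Rightarrow> real"
    and dmu :: 'j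
    and lam :: "'j \<Rightarrow> real" and sm :: "'i \<Rightarrow> real" and sp :: "'r \<Rightarrow> real"
    and \<delta> :: real and \<alpha> :: "'j \<Rightarrow> real" and \<gamma> :: real
  assumes "\<forall>i j. X i j \<ge> 0" and "\<forall>r j. Y r j \<ge> 0"
    and "mip_optimal X Y dmu lam sm sp \<delta> \<alpha> \<gamma>"
  shows "maximal_elem X Y dmu (\<lambda>j. lam j / \<delta>)"
proof -
  let ?E = "ram_E X Y"
  have F: "mip_feasible X Y dmu lam sm sp \<delta> \<alpha> \<gamma>"
    using assms(3) unfolding mip_optimal_def by blast
  have bound: "real (num_pos ?E mu) + 1 \<le> mip_obj ?E \<alpha> \<gamma>" if "mu \<in> Omega X Y dmu" for mu
    using Omega_mip_feasible[OF that] assms(3) unfolding mip_optimal_def by metis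
  obtain mu0 where "mu0 \<in> Omega X Y dmu"
    using Omega_nonempty by blast
  from bound[OF this] have "\<delta> > 0"
    using mip_feasible_delta_pos[OF F] by linarith
  then have "systemS X Y dmu (\<lambda>j. lam j / \<delta>) (\<lambda>i. sm i / \<delta>) (\<lambda>r. sp r / \<delta>)"
    using F by (simp add: systemS_iff_mip_cone_scaled[OF \<open>\<delta> > 0\<close>] mip_feasible_iff_cone)
  then have "(\<lambda>j. lam j / \<delta>) \<in> Omega X Y dmu"
    unfolding Omega_def by blast
  moreover have "num_pos ?E (\<lambda>j. lam j / \<delta>) = num_pos ?E lam"
    unfolding num_pos_def using \<open>\<delta> > 0\<close> by (simp add: zero_less_divide_iff)
  ultimately show ?thesis
    using bound mip_obj_le_num_pos[OF F] unfolding maximal_elem_def by fastforce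
qed

end
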